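(* Let $M$ be an $\mathcal L$-atomic module and let $\mathcal L'=\bigcup_{i\in I}\mathcal L_i$ be a class of modules with $\mathcal L'\subseteq\langle\mathcal L\rangle$. If $M$ is strict $\mathcal L_i$-atomic for every $i\in I$, then $M$ is strict $\mathcal L'$-atomic.
   Context: $R$ is an associative ring with $1$; "module" means left $R$-module; $\mathcal L$ and all other classes are nonempty classes of modules. A pp (positive primitive) formula $\phi(\bar x)$ is an existentially quantified finite system of $R$-linear equations; $\phi(M)$ denotes the set of tuples of $M$ satisfying it. For a class $\mathcal L$ and pp formulas $\phi,\psi$ in the same free variables, $\phi\le_{\mathcal L}\psi$ means $\phi(L)\subseteq\psi(L)$ for all $L\in\mathcal L$. ${\rm pp}_M(\bar m)$ is the set of pp formulas satisfied by the tuple $\bar m$ in $M$. $\langle\mathcal L\rangle$ denotes the definable subcategory generated by $\mathcal L$, i.e. the class of all modules $N$ with $\phi(N)\subseteq\psi(N)$ whenever $\phi\le_{\mathcal L}\psi$. A module $M$ is $\mathcal L$-atomic if for every finite tuple $\bar m$ in $M$ there is $\phi\in{\rm pp}_M(\bar m)$ with $\phi\le_{\mathcal L}\psi$ for all $\psi\in{\rm pp}_M(\bar m)$. A pointed module $(M,\bar m)$ is an $\mathcal L$-free realization of a pp formula $\phi$ if $\bar m\in\phi(M)$ and for every $L\in\mathcal L$ and every $\bar c\in\phi(L)$ there is a homomorphism $M\to L$ sending $\bar m$ to $\bar c$ ($M$ need not be in $\mathcal L$). $M$ is strict $\mathcal L$-atomic if every finite tuple in $M$ is an $\mathcal L$-free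 realization of some pp formula. *)

theory Defs
  imports "HOL-Algebra.Module"
begin

text \<open>Left modules over an arbitrary (not necessarily commutative) ring with 1.
  Same axioms as the library locale module, but with ring instead of cring.\<close>

locale lmodule = R?: ring R + M?: abelian_group M
  for R :: "('r, 'rr) ring_scheme" (structure) and M :: "('r, 'm, 'mm) module_scheme" (structure) +
  assumes smult_closed [simp, intro]:
      "\<lbrakk> a \<in> carrier R; x \<in> carrier M \<rbrakk> \<Longrightarrow> a \<odot>\<^bsub>M\<^esub> x \<in> carrier M"
    and smult_l_distr:
      "\<lbrakk> a \<in> carrier R; b \<in> carrier R; x \<in> carrier M \<rbrakk> \<Longrightarrow>
      (a \<oplus>\<^bsub>R\<^esub> b) \<odot>\<^bsub>M\<^esub> x = a \<odot>\<^bsub>M\<^esub> x \<oplus>\<^bsub>M\<^esub> b \<odot>\<^bsub>M\<^esub> x"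
    and smult_r_distr:
      "\<lbrakk> a \<in> carrier R; x \<in> carrier M; y \<in> carrier M \<rbrakk> \<Longrightarrow>
      a \<odot>\<^bsub>M\<^esub> (x \<oplus>\<^bsub>M\<^esub> y) = a \<odot>\<^bsub>M\<^esub> x \<oplus>\<^bsub>M\<^esub> a \<odot>\<^bsub>M\<^esub> y"
    and smult_assoc1:
      "\<lbrakk> a \<in> carrier R; b \<in> carrier R; x \<in> carrier M \<rbrakk> \<Longrightarrow>
      (a \<otimes>\<^bsub>R\<^esub> b) \<odot>\<^bsub>M\<^esub> x = a \<odot>\<^bsub>M\<^esub> (b \<odot>\<^bsub>M\<^esub> x)"
    and smult_one [simp]:
      "x \<in> carrier M \<Longrightarrow> \<one>\<^bsub>R\<^esub> \<odot>\<^bsub>M\<^esub> x = x"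

definition lmod_hom ::
  "('r, 'rr) ring_scheme \<Rightarrow> ('r, 'm, 'mm) module_scheme \<Rightarrow> ('r, 'n, 'nn) module_scheme \<Rightarrow> ('m \<Rightarrow> 'n) set" where
  "lmod_hom R M N = {h. h \<in> carrier M \<rightarrow> carrier N \<and>
     (\<forall>x\<in>carrier M. \<forall>y\<in>carrier M. h (x \<oplus>\<^bsub>M\<^esub> y) = h x \<oplus>\<^bsub>N\<^esub> h y) \<and>
     (\<forall>a\<in>carrier R. \<forall>x\<in>carrier M. h (a \<odot>\<^bsub>M\<^esub> x) = a \<odot>\<^bsub>N\<^esub> h x)}"

text \<open>A pp formula is represented as a pair (k, E): k existentially quantified
  variables and a finite list E of R-linear equations. A pp formula in n free
  variables x_0..x_(n-1): each equation e :: nat \<Rightarrow> 'r gives coefficients, the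
  equation reads  sum_(j < n+k) e j * z_j = 0  where z = x @ y (y the bound
  variables).\<close>
type_synonym 'r ppf = "nat \<times> (nat \<Rightarrow> 'r) list"

definition is_pp :: "('r, 'rr) ring_scheme \<Rightarrow> nat \<Rightarrow> 'r ppf \<Rightarrow> bool" where
  "is_pp R n \<phi> \<longleftrightarrow> (\<forall>e\<in>set (snd \<phi>). \<forall>j < n + fst \<phi>. e j \<in> carrier R)"

definition pp_def_set :: "('r, 'm, 'mm) module_scheme \<Rightarrow> nat \<Rightarrow> 'r ppf \<Rightarrow> 'm list set" where
  "pp_def_set M n \<phi> = {x. length x = n \<and> set x \<subseteq> carrier M \<and>
     (\<exists>y. length y = fst \<phi> \<and> set y \<subseteq> carrier M \<and>
        (\<forall>e\<in>set (snd \<phi>).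
           (\<Oplus>\<^bsub>M\<^esub> j\<in>{..<n + fst \<phi>}. e j \<odot>\<^bsub>M\<^esub> ((x @ y) ! j)) = \<zero>\<^bsub>M\<^esub>))}"

definition pp_le :: "('r, 'rr) ring_scheme \<Rightarrow> ('r, 'a, 'aa) module_scheme set \<Rightarrow> nat \<Rightarrow> 'r ppf \<Rightarrow> 'r ppf \<Rightarrow> bool" where
  "pp_le R \<L> n \<phi> \<psi> \<longleftrightarrow> (\<forall>L\<in>\<L>. pp_def_set L n \<phi> \<subseteq> pp_def_set L n \<psi>)"

definition pp_type :: "('r, 'rr) ring_scheme \<Rightarrow> ('r, 'm, 'mm) module_scheme \<Rightarrow> 'm list \<Rightarrow> 'r ppf set" where
  "pp_type R M m = {\<phi>. is_pp R (length m) \<phi> \<and> m \<in> pp_def_set M (length m) \<phi>}"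

definition in_def_subcat :: "('r, 'rr) ring_scheme \<Rightarrow> ('r, 'a, 'aa) module_scheme set \<Rightarrow> ('r, 'n, 'nn) module_scheme \<Rightarrow> bool" where
  "in_def_subcat R \<L> N \<longleftrightarrow> lmodule R N \<and>
     (\<forall>n \<phi> \<psi>. is_pp R n \<phi> \<longrightarrow> is_pp R n \<psi> \<longrightarrow> pp_le R \<L> n \<phi> \<psi> \<longrightarrow>
        pp_def_set N n \<phi> \<subseteq> pp_def_set N n \<psi>)"

definition L_atomic :: "('r, 'rr) ring_scheme \<Rightarrow> ('r, 'a, 'aa) module_scheme set \<Rightarrow> ('r, 'm, 'mm) module_scheme \<Rightarrow> bool" where
  "L_atomic R \<L> M \<longleftrightarrow> (\<forall>m. set m \<subseteq> carrier M \<longrightarrow>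
     (\<exists>\<phi>\<in>pp_type R M m. \<forall>\<psi>\<in>pp_type R M m. pp_le R \<L> (length m) \<phi> \<psi>))"

definition free_realization :: "('r, 'rr) ring_scheme \<Rightarrow> ('r, 'a, 'aa) module_scheme set \<Rightarrow> 'r ppf \<Rightarrow> ('r, 'm, 'mm) module_scheme \<Rightarrow> 'm list \<Rightarrow> bool" where
  "free_realization R \<L> \<phi> M m \<longleftrightarrow> m \<in> pp_def_set M (length m) \<phi> \<and>
     (\<forall>L\<in>\<L>. \<forall>c\<in>pp_def_set L (length m) \<phi>. \<exists>h\<in>lmod_hom R M L. map h m = c)"

definition strict_L_atomic :: "('r, 'rr) ring_scheme \<Rightarrow> ('r, 'a, 'aa) module_scheme set \<Rightarrow> ('r, 'm, 'mm) module_scheme \<Rightarrow> bool" where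
  "strict_L_atomic R \<L> M \<longleftrightarrow> (\<forall>m. set m \<subseteq> carrier M \<longrightarrow>
     (\<exists>\<phi>. is_pp R (length m) \<phi> \<and> free_realization R \<L> \<phi> M m))"

end

theory Submission
  imports Defs
begin

text \<open>If \<open>\<phi>\<close> generates the pp-type of \<open>m\<close> in \<open>M\<close> relative to \<open>\<L>\<close>, then \<open>\<phi>\<close> implies every
  formula freely realized by \<open>m\<close>, in every module of \<open>\<langle>\<L>\<rangle>\<close>. So whenever \<open>(M, m)\<close> is an
  \<open>\<L>\<^sub>i\<close>-free realization of some \<open>\<psi>\<close>, it is also one of \<open>\<phi>\<close>; and a single formula freely
  realized relative to every \<open>\<L>\<^sub>i\<close> is freely realized relative to their union.\<close>

definition pp_type_generator ::
  "('r, 'rr) ring_scheme \<Rightarrow> ('r, 'a, 'aa) module_scheme set \<Rightarrow> ('r, 'm, 'mm) module_scheme \<Rightarrow>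
   'm list \<Rightarrow> 'r ppf \<Rightarrow> bool" where
  "pp_type_generator R \<L> M m \<phi> \<longleftrightarrow>
     \<phi> \<in> pp_type R M m \<and> (\<forall>\<psi>\<in>pp_type R M m. pp_le R \<L> (length m) \<phi> \<psi>)"

lemma L_atomic_obtains_generator:
  assumes "L_atomic R \<L> M" and "set m \<subseteq> carrier M"
  obtains \<phi> where "pp_type_generator R \<L> M m \<phi>"
  using assms unfolding L_atomic_def pp_type_generator_def by blast

lemma free_realization_in_pp_type:
  assumes "is_pp R (length m) \<psi>" and "free_realization R \<K> \<psi> M m"
  shows "\<psi> \<in> pp_type R M m"
  using assms by (simp add: pp_type_def free_realization_def)

lemma in_def_subcat_pp_le_subset:
  assumes "in_def_subcat R \<L> N" and "is_pp R n \<phi>" and "is_pp R n \<psi>" and "pp_le R \<L> n \<phi> \<psi>"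
  shows "pp_def_set N n \<phi> \<subseteq> pp_def_set N n \<psi>"
  using assms unfolding in_def_subcat_def by blast

lemma free_realization_strengthen:
  assumes "free_realization R \<K> \<psi> M m"
    and "m \<in> pp_def_set M (length m) \<phi>"
    and "\<forall>L\<in>\<K>. pp_def_set L (length m) \<phi> \<subseteq> pp_def_set L (length m) \<psi>"
  shows "free_realization R \<K> \<phi> M m"
  using assms unfolding free_realization_def by blast

lemma free_realization_UN:
  assumes "\<forall>i\<in>I. free_realization R (\<K> i) \<phi> M m" and "m \<in> pp_def_set M (length m) \<phi>"
  shows "free_realization R (\<Union>i\<in>I. \<K> i) \<phi> M m"
  using assms unfolding free_realization_def by blast

lemma pp_type_generator_free_realization:
  assumes gen: "pp_type_generator R \<L> M m \<phi>"
    and strict: "strict_L_atomic R \<K> M" and m: "set m \<subseteq> carrier M"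
    and subcat: "\<forall>N\<in>\<K>. in_def_subcat R \<L> N"
  shows "free_realization R \<K> \<phi> M m"
proof -
  from strict m obtain \<psi> where \<psi>: "is_pp R (length m) \<psi>"
    and fr: "free_realization R \<K> \<psi> M m"
    unfolding strict_L_atomic_def by blast
  have "\<psi> \<in> pp_type R M m"
    using \<psi> fr by (rule free_realization_in_pp_type)
  with gen have le: "pp_le R \<L> (length m) \<phi> \<psi>" and \<phi>: "\<phi> \<in> pp_type R M m"
    unfolding pp_type_generator_def by blast+
  have "m \<in> pp_def_set M (length m) \<phi>"
    using \<phi> by (simp add: pp_type_def)
  moreover have "\<forall>L\<in>\<K>. pp_def_set L (length m) \<phi> \<subseteq> pp_def_set L (length m) \<psi>"
  proof
    fix L assume "L \<in> \<K>"
    with subcat have "in_def_subcat R \<L> L" ..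
    moreover have "is_pp R (length m) \<phi>"
      using \<phi> by (simp add: pp_type_def)
    ultimately show "pp_def_set L (length m) \<phi> \<subseteq> pp_def_set L (length m) \<psi>"
      using \<psi> le by (rule in_def_subcat_pp_le_subset)
  qed
  ultimately show ?thesis
    by (rule free_realization_strengthen[OF fr])
qed

theorem lemma2p2:
  fixes R :: "('r, 'rr) ring_scheme"
    and \<L> :: "('r, 'a, 'aa) module_scheme set"
    and \<L>i :: "'i \<Rightarrow> ('r, 'b, 'bb) module_scheme set"
    and I :: "'i set"
    and M :: "('r, 'm, 'mm) module_scheme"
  assumes "ring R"
    and "\<L> \<noteq> {}" and "\<forall>L\<in>\<L>. lmodule R L"
    and "\<forall>i\<in>I. \<L>i i \<noteq> {} \<and> (\<forall>L\<in>\<L>i i. lmodule R L)"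
    and "(\<Union>i\<in>I. \<L>i i) \<noteq> {}"
    and "lmodule R M"
    and "L_atomic R \<L> M"
    and "\<forall>N\<in>(\<Union>i\<in>I. \<L>i i). in_def_subcat R \<L> N"
    and "\<forall>i\<in>I. strict_L_atomic R (\<L>i i) M"
  shows "strict_L_atomic R (\<Union>i\<in>I. \<L>i i) M"
  unfolding strict_L_atomic_def
proof (intro allI impI)
  fix m assume m: "set m \<subseteq> carrier M"
  obtain \<phi> where gen: "pp_type_generator R \<L> M m \<phi>"
    using assms(7) m by (rule L_atomic_obtains_generator)
  then have \<phi>: "\<phi> \<in> pp_type R M m"
    unfolding pp_type_generator_def by blast
  have "\<forall>i\<in>I. free_realization R (\<L>i i) \<phi> M m"
  proof
    fix i assume "i \<in> I"
    then show "free_realization R (\<L>i i) \<phi> M m"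
      using assms(8,9) by (intro pp_type_generator_free_realization[OF gen _ m]) auto
  qed
  then have "free_realization R (\<Union>i\<in>I. \<L>i i) \<phi> M m"
    using \<phi> by (intro free_realization_UN) (simp_all add: pp_type_def)
  with \<phi> show "\<exists>\<phi>. is_pp R (length m) \<phi> \<and> free_realization R (\<Union>i\<in>I. \<L>i i) \<phi> M m"
    unfolding pp_type_def by blast
qed

end
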